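(* Let $(C,S)$ be a partially shaded tree, where $C$ is the support tree of a vertex of a non-degenerate transportation polytope $\mathrm{TP}(u,v)$. If some well-connected component of $(C,S)$ contains no open node, then $(C,S)$ is fully shaded.
   Context: Let $N_1,N_2\ge1$, $u\in\mathbb{R}_{>0}^{N_1}$, $v\in\mathbb{R}_{>0}^{N_2}$ with $\sum_iu_i=\sum_jv_j$, and $\mathrm{TP}(u,v)=\{y\in\mathbb{R}^{N_1\times N_2}: \sum_j y_{ij}=u_i\ \forall i,\ \sum_i y_{ij}=v_j\ \forall j,\ y\ge 0\}$. View supply nodes $\sigma^1,\dots,\sigma^{N_1}$ and demand nodes $\delta^1,\dots,\delta^{N_2}$ as the two sides of the complete bipartite graph $K_{N_1,N_2}$; the support graph of $y$ consists of the edges $\{\sigma^i,\delta^j\}$ with $y_{ij}>0$. $\mathrm{TP}(u,v)$ is non-degenerate if there are no nonempty proper subsets $I\subsetneq\{1,\dots,N_1\}$, $J\subsetneq\{1,\dots,N_2\}$ with $\sum_{i\in I}u_i=\sum_{j\in J}v_j$; then the support graph of each vertex is a spanning tree of $K_{N_1,N_2}$, which determines the vertex; these are called trees. Fix a tree $F$ (the final tree). A partially shaded tree is a pair $(C,S)$ where $C$ is a tree and $S\subseteq C\cap F$ is the set of shaded edges (other edges of $C$ are unshaded); it is fully shaded if $S=C$. A supply node $\sigma$ is well-connected in $(C,S)$ if every edge of $F$ incident to $\sigma$ lies in $S$; otherwise it is open. A demand node is well-connected if it is not incident to an unshaded edge of $C$; otherwise it is open. A well-connected edge is a shaded edge incident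 to at least one well-connected node. The well-connected components are the connected components of the graph on all $N_1+N_2$ nodes whose edges are the well-connected edges (in particular a node incident to no well-connected edge forms a component by itself). *)

theory Defs
  imports Complex_Main
begin

text \<open>Supply nodes are indexed by i < N1, demand nodes by j < N2. A point of
  R^(N1 x N2) is represented as a function y :: nat => nat => real that vanishes
  outside the index range. An edge {sigma^i, delta^j} is the pair (i, j).\<close>

definition TP :: "nat \<Rightarrow> nat \<Rightarrow> (nat \<Rightarrow> real) \<Rightarrow> (nat \<Rightarrow> real) \<Rightarrow> (nat \<Rightarrow> nat \<Rightarrow> real) set" where
  "TP N1 N2 u v = {y. (\<forall>i<N1. (\<Sum>j<N2. y i j) = u i)
                    \<and> (\<forall>j<N2. (\<Sum>i<N1. y i j) = v j)
                    \<and> (\<forall>i j. 0 \<le> y i j)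
                    \<and> (\<forall>i j. \<not> (i < N1 \<and> j < N2) \<longrightarrow> y i j = 0)}"

definition non_degenerate :: "nat \<Rightarrow> nat \<Rightarrow> (nat \<Rightarrow> real) \<Rightarrow> (nat \<Rightarrow> real) \<Rightarrow> bool" where
  "non_degenerate N1 N2 u v \<longleftrightarrow>
     \<not> (\<exists>I J. I \<noteq> {} \<and> I \<subset> {..<N1} \<and> J \<noteq> {} \<and> J \<subset> {..<N2}
              \<and> (\<Sum>i\<in>I. u i) = (\<Sum>j\<in>J. v j))"

definition is_vertex :: "(nat \<Rightarrow> nat \<Rightarrow> real) set \<Rightarrow> (nat \<Rightarrow> nat \<Rightarrow> real) \<Rightarrow> bool" where
  "is_vertex P y \<longleftrightarrow> y \<in> P \<and>
     (\<forall>a\<in>P. \<forall>b\<in>P. \<forall>t::real. 0 < t \<and> t < 1 \<and> y = (\<lambda>i j. t * a i j + (1 - t) * b i j) \<longrightarrow> a = b)"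

definition support :: "nat \<Rightarrow> nat \<Rightarrow> (nat \<Rightarrow> nat \<Rightarrow> real) \<Rightarrow> (nat \<times> nat) set" where
  "support N1 N2 y = {(i, j). i < N1 \<and> j < N2 \<and> 0 < y i j}"

definition is_tree :: "nat \<Rightarrow> nat \<Rightarrow> (nat \<Rightarrow> real) \<Rightarrow> (nat \<Rightarrow> real) \<Rightarrow> (nat \<times> nat) set \<Rightarrow> bool" where
  "is_tree N1 N2 u v C \<longleftrightarrow> (\<exists>y. is_vertex (TP N1 N2 u v) y \<and> C = support N1 N2 y)"

text \<open>Nodes: Inl i = supply node sigma^i, Inr j = demand node delta^j.\<close>
definition nodes :: "nat \<Rightarrow> nat \<Rightarrow> (nat + nat) set" where
  "nodes N1 N2 = Inl ` {..<N1} \<union> Inr ` {..<N2}"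

definition supply_wc :: "(nat \<times> nat) set \<Rightarrow> (nat \<times> nat) set \<Rightarrow> nat \<Rightarrow> bool" where
  "supply_wc F S i \<longleftrightarrow> (\<forall>j. (i, j) \<in> F \<longrightarrow> (i, j) \<in> S)"

definition demand_wc :: "(nat \<times> nat) set \<Rightarrow> (nat \<times> nat) set \<Rightarrow> nat \<Rightarrow> bool" where
  "demand_wc C S j \<longleftrightarrow> (\<forall>i. (i, j) \<in> C \<longrightarrow> (i, j) \<in> S)"

definition node_wc :: "(nat \<times> nat) set \<Rightarrow> (nat \<times> nat) set \<Rightarrow> (nat \<times> nat) set \<Rightarrow> nat + nat \<Rightarrow> bool" where
  "node_wc F C S x = (case x of Inl i \<Rightarrow> supply_wc F S i | Inr j \<Rightarrow> demand_wc C S j)"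

abbreviation node_open :: "(nat \<times> nat) set \<Rightarrow> (nat \<times> nat) set \<Rightarrow> (nat \<times> nat) set \<Rightarrow> nat + nat \<Rightarrow> bool" where
  "node_open F C S x \<equiv> \<not> node_wc F C S x"

definition wc_edges :: "(nat \<times> nat) set \<Rightarrow> (nat \<times> nat) set \<Rightarrow> (nat \<times> nat) set \<Rightarrow> (nat \<times> nat) set" where
  "wc_edges F C S = {(i, j). (i, j) \<in> S \<and> (supply_wc F S i \<or> demand_wc C S j)}"

definition wc_adj :: "(nat \<times> nat) set \<Rightarrow> (nat \<times> nat) set \<Rightarrow> (nat \<times> nat) set \<Rightarrow> ((nat + nat) \<times> (nat + nat)) set" where
  "wc_adj F C S = {(Inl i, Inr j) | i j. (i, j) \<in> wc_edges F C S}
                \<union> {(Inr j, Inl i) | i j. (i, j) \<in> wc_edges F C S}"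

definition wc_component :: "nat \<Rightarrow> nat \<Rightarrow> (nat \<times> nat) set \<Rightarrow> (nat \<times> nat) set \<Rightarrow> (nat \<times> nat) set \<Rightarrow> nat + nat \<Rightarrow> (nat + nat) set" where
  "wc_component N1 N2 F C S x = {z \<in> nodes N1 N2. (x, z) \<in> (wc_adj F C S)\<^sup>*}"

definition wc_components :: "nat \<Rightarrow> nat \<Rightarrow> (nat \<times> nat) set \<Rightarrow> (nat \<times> nat) set \<Rightarrow> (nat \<times> nat) set \<Rightarrow> (nat + nat) set set" where
  "wc_components N1 N2 F C S = wc_component N1 N2 F C S ` nodes N1 N2"

end

theory Submission
  imports Defs
begin

text \<open>Let \<open>K\<close> be a well-connected component without open nodes, with supply nodes \<open>I\<close>
  and demand nodes \<open>J\<close>. Every edge of \<open>F\<close> leaving \<open>I\<close> is shaded at a well-connected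
  node, so it stays in \<open>K\<close> and ends in \<open>J\<close>; dually every edge of \<open>C\<close> entering \<open>J\<close>
  starts in \<open>I\<close>. Reading off the flows of the vertices with supports \<open>F\<close> and \<open>C\<close> gives
  \<open>u(I) \<le> v(J)\<close> and \<open>v(J) \<le> u(I)\<close>. Non-degeneracy and positivity then force \<open>K\<close> to
  contain every node, so every demand node is well-connected and all of \<open>C\<close> is shaded.\<close>

lemma sum_rows_le_sum_cols_if_closed:
  fixes y :: "nat \<Rightarrow> nat \<Rightarrow> real"
  assumes nonneg: "\<forall>i j. 0 \<le> y i j"
    and "I \<subseteq> {..<m}" "J \<subseteq> {..<n}"
    and closed: "\<forall>i\<in>I. \<forall>j<n. 0 < y i j \<longrightarrow> j \<in> J"
  shows "(\<Sum>i\<in>I. \<Sum>j<n. y i j) \<le> (\<Sum>j\<in>J. \<Sum>i<m. y i j)"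
proof -
  have "(\<Sum>i\<in>I. \<Sum>j<n. y i j) = (\<Sum>i\<in>I. \<Sum>j\<in>J. y i j)"
  proof (rule sum.cong[OF refl])
    fix i assume i: "i \<in> I"
    show "(\<Sum>j<n. y i j) = (\<Sum>j\<in>J. y i j)"
    proof (rule sum.mono_neutral_right)
      show "\<forall>j\<in>{..<n} - J. y i j = 0"
        using closed i nonneg by (metis DiffE lessThan_iff order_less_le)
    qed (use assms(3) in auto)
  qed
  also have "\<dots> = (\<Sum>j\<in>J. \<Sum>i\<in>I. y i j)"
    by (rule sum.swap)
  also have "\<dots> \<le> (\<Sum>j\<in>J. \<Sum>i<m. y i j)"
    using assms(2) nonneg by (intro sum_mono sum_mono2) auto
  finally show ?thesis .
qed

lemma TP_supply_le_demand_if_closed: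
  assumes "y \<in> TP N1 N2 u v" "I \<subseteq> {..<N1}" "J \<subseteq> {..<N2}"
    and "\<forall>i\<in>I. \<forall>j<N2. 0 < y i j \<longrightarrow> j \<in> J"
  shows "sum u I \<le> sum v J"
proof -
  have "sum u I = (\<Sum>i\<in>I. \<Sum>j<N2. y i j)"
    using assms(1,2) unfolding TP_def by (intro sum.cong) auto
  also have "\<dots> \<le> (\<Sum>j\<in>J. \<Sum>i<N1. y i j)"
    using assms unfolding TP_def by (intro sum_rows_le_sum_cols_if_closed) auto
  also have "\<dots> = sum v J"
    using assms(1,3) unfolding TP_def by (intro sum.cong) auto
  finally show ?thesis .
qed

lemma TP_demand_le_supply_if_closed:
  assumes "y \<in> TP N1 N2 u v" "I \<subseteq> {..<N1}" "J \<subseteq> {..<N2}"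
    and "\<forall>j\<in>J. \<forall>i<N1. 0 < y i j \<longrightarrow> i \<in> I"
  shows "sum v J \<le> sum u I"
proof -
  have "sum v J = (\<Sum>j\<in>J. \<Sum>i<N1. y i j)"
    using assms(1,3) unfolding TP_def by (intro sum.cong) auto
  also have "\<dots> \<le> (\<Sum>i\<in>I. \<Sum>j<N2. y i j)"
    using assms unfolding TP_def
    by (intro sum_rows_le_sum_cols_if_closed[where y = "\<lambda>j i. y i j"]) auto
  also have "\<dots> = sum u I"
    using assms(1,2) unfolding TP_def by (intro sum.cong) auto
  finally show ?thesis .
qed

lemma sum_less_sum_lessThan:
  fixes f :: "nat \<Rightarrow> real"
  assumes "A \<subset> {..<n}" "\<forall>i<n. 0 < f i"
  shows "sum f A < sum f {..<n}"
proof -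
  obtain b where "b \<in> {..<n} - A" using assms(1) by blast
  with assms show ?thesis
    by (intro sum_strict_mono2) (auto simp: less_imp_le)
qed

lemma non_degenerate_balanced_subsets_full:
  assumes u_pos: "\<forall>i<N1. 0 < u i" and v_pos: "\<forall>j<N2. 0 < v j"
    and total: "(\<Sum>i<N1. u i) = (\<Sum>j<N2. v j)"
    and nd: "non_degenerate N1 N2 u v"
    and sub: "I \<subseteq> {..<N1}" "J \<subseteq> {..<N2}"
    and ne: "I \<noteq> {} \<or> J \<noteq> {}"
    and balanced: "sum u I = sum v J"
  shows "I = {..<N1} \<and> J = {..<N2}"
proof -
  have pos_u: "I \<noteq> {} \<Longrightarrow> 0 < sum u I" and pos_v: "J \<noteq> {} \<Longrightarrow> 0 < sum v J"
    using sub u_pos v_pos by (auto intro!: sum_pos intro: finite_subset)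
  have "I \<noteq> {}" "J \<noteq> {}"
    using ne balanced pos_u pos_v by (metis less_irrefl sum.empty)+
  then have "I = {..<N1} \<or> J = {..<N2}"
    using nd sub balanced unfolding non_degenerate_def by blast
  then show ?thesis
  proof
    assume I: "I = {..<N1}"
    then have "\<not> J \<subset> {..<N2}"
      using sum_less_sum_lessThan[of J N2 v] v_pos total balanced by auto
    with sub(2) I show ?thesis by blast
  next
    assume J: "J = {..<N2}"
    then have "\<not> I \<subset> {..<N1}"
      using sum_less_sum_lessThan[of I N1 u] u_pos total balanced by auto
    with sub(1) J show ?thesis by blast
  qed
qed

lemma wc_component_step:
  assumes "z \<in> wc_component N1 N2 F C S x" "(z, w) \<in> wc_adj F C S" "w \<in> nodes N1 N2"
  shows "w \<in> wc_component N1 N2 F C S x"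
  using assms unfolding wc_component_def by (auto intro: rtrancl_into_rtrancl)

lemma wc_adj_supply:
  "supply_wc F S i \<Longrightarrow> (i, j) \<in> F \<Longrightarrow> (Inl i, Inr j) \<in> wc_adj F C S"
  unfolding wc_adj_def wc_edges_def supply_wc_def by auto

lemma wc_adj_demand:
  "demand_wc C S j \<Longrightarrow> (i, j) \<in> C \<Longrightarrow> (Inr j, Inl i) \<in> wc_adj F C S"
  unfolding wc_adj_def wc_edges_def demand_wc_def by auto

lemma is_tree_support:
  "is_tree N1 N2 u v C \<Longrightarrow> \<exists>y \<in> TP N1 N2 u v. C = support N1 N2 y"
  unfolding is_tree_def is_vertex_def by blast

theorem lemma2:
  fixes N1 N2 :: nat and u v :: "nat \<Rightarrow> real" and F C S :: "(nat \<times> nat) set"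
  assumes "N1 \<ge> 1" and "N2 \<ge> 1"
    and "\<forall>i<N1. 0 < u i" and "\<forall>j<N2. 0 < v j"
    and "(\<Sum>i<N1. u i) = (\<Sum>j<N2. v j)"
    and "non_degenerate N1 N2 u v"
    and "is_tree N1 N2 u v F"
    and "is_tree N1 N2 u v C"
    and "S \<subseteq> C \<inter> F"
    and "\<exists>K\<in>wc_components N1 N2 F C S. \<forall>x\<in>K. \<not> node_open F C S x"
  shows "S = C"
proof -
  obtain yF yC where yF: "yF \<in> TP N1 N2 u v" "F = support N1 N2 yF"
    and yC: "yC \<in> TP N1 N2 u v" "C = support N1 N2 yC"
    using assms(7,8) is_tree_support by metis
  obtain x where x: "x \<in> nodes N1 N2"
    and wc: "\<forall>z\<in>wc_component N1 N2 F C S x. node_wc F C S z"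
    using assms(10) unfolding wc_components_def by blast
  define K where "K = wc_component N1 N2 F C S x"
  define I where "I = {i. i < N1 \<and> Inl i \<in> K}"
  define J where "J = {j. j < N2 \<and> Inr j \<in> K}"
  have sub: "I \<subseteq> {..<N1}" "J \<subseteq> {..<N2}"
    unfolding I_def J_def by auto
  have "\<forall>i\<in>I. \<forall>j<N2. 0 < yF i j \<longrightarrow> j \<in> J"
    using wc yF(2) unfolding I_def J_def K_def
    by (force simp: node_wc_def support_def nodes_def intro: wc_component_step wc_adj_supply)
  moreover have "\<forall>j\<in>J. \<forall>i<N1. 0 < yC i j \<longrightarrow> i \<in> I"
    using wc yC(2) unfolding I_def J_def K_def
    by (force simp: node_wc_def support_def nodes_def intro: wc_component_step wc_adj_demand)
  ultimately have "sum u I = sum v J"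
    using TP_supply_le_demand_if_closed[OF yF(1) sub] TP_demand_le_supply_if_closed[OF yC(1) sub]
    by (simp add: order_antisym)
  moreover have "I \<noteq> {} \<or> J \<noteq> {}"
    using x unfolding I_def J_def K_def wc_component_def nodes_def by auto
  ultimately have "J = {..<N2}"
    using non_degenerate_balanced_subsets_full[OF assms(3-6) sub] by blast
  then have "demand_wc C S j" if "j < N2" for j
    using wc that unfolding J_def K_def node_wc_def by force
  then have "C \<subseteq> S"
    using yC(2) unfolding support_def demand_wc_def by auto
  with assms(9) show ?thesis by blast
qed

end
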